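(* Let $V\neq\{0\}$ be a vector space over a field $F$ and let $T:V\to V$ have a vanishing polynomial, with minimal polynomial $p$. (1) If $T$ is nilpotent and is $\gamma$-homogeneous or absolutely $\gamma$-homogeneous, then $0$ is the only eigenvalue of $T$ (and it is the only root of $p$). (2) If $T$ is not nilpotent and $F$ is infinite, then for $\gamma\notin\{0,1\}$, $T$ is neither $\gamma$-homogeneous, nor absolutely $\gamma$-homogeneous, nor positively $\gamma$-homogeneous. (3) If $T$ is $1$-homogeneous and $|F|>2$, then $p(\lambda)=0$ for every eigenvalue $\lambda$ of $T$. If $T$ is absolutely $1$-homogeneous, then $p(0)=0$ and $p(|\lambda|)=0$ for every eigenvalue $\lambda$ of $T$. (4) Let $T$ be $0$-homogeneous, absolutely $0$-homogeneous, or positively $0$-homogeneous. If $p(1)\neq0$, then the only possible eigenvalue of $T$ is $0$ (in the positively homogeneous case: the only possible nonnegative eigenvalue is $0$). Moreover $p(0)=0$, except possibly in the case of (plain) $0$-homogeneity with $|F|=2$.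
   Context: $T^0=I$, $T^i=T\circ T^{i-1}$; $p(T)(v)=\sum a_iT^i(v)$. A vanishing polynomial of $T$ is a nonzero $p\in F[x]$ with $p(T)(v)=0$ for all $v$; the minimal polynomial is the unique monic one of least degree. $T$ is nilpotent if $T^m=0$ for some $m$. A vector $0\neq v$ is an eigenvector with eigenvalue $\lambda\in F$ if $T(v)=\lambda v$. For $\gamma\in\mathbb{N}$, $T$ is $\gamma$-homogeneous if $T(av)=a^\gamma T(v)$ for all $0\neq a\in F$, $v\in V$. For $F=\mathbb{R}$ or $\mathbb{C}$ and $\gamma\ge0$ real, $T$ is absolutely $\gamma$-homogeneous if $T(av)=|a|^\gamma T(v)$ for all $a\neq0$, $v\in V$. For $F=\mathbb{R}$ and $\gamma\ge0$, $T$ is positively $\gamma$-homogeneous if $T(av)=a^\gamma T(v)$ for all $a>0$, $v\in V$. *)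

theory Defs
  imports Main "HOL-Computational_Algebra.Polynomial"
begin

text \<open>A vector space V over F is modelled by a type 'v with a scalar multiplication
  s satisfying the library locale vector_space; V is the whole type. T is an
  arbitrary (not necessarily linear) map.\<close>

definition poly_app :: "('f::field \<Rightarrow> 'v::ab_group_add \<Rightarrow> 'v) \<Rightarrow> 'f poly \<Rightarrow> ('v \<Rightarrow> 'v) \<Rightarrow> 'v \<Rightarrow> 'v" where
  "poly_app s p T v = (\<Sum>i\<le>degree p. s (coeff p i) ((T ^^ i) v))"

definition vanishing_poly :: "('f::field \<Rightarrow> 'v::ab_group_add \<Rightarrow> 'v) \<Rightarrow> 'f poly \<Rightarrow> ('v \<Rightarrow> 'v) \<Rightarrow> bool" where
  "vanishing_poly s p T \<longleftrightarrow> p \<noteq> 0 \<and> (\<forall>v. poly_app s p T v = 0)"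

definition minimal_poly :: "('f::field \<Rightarrow> 'v::ab_group_add \<Rightarrow> 'v) \<Rightarrow> 'f poly \<Rightarrow> ('v \<Rightarrow> 'v) \<Rightarrow> bool" where
  "minimal_poly s p T \<longleftrightarrow> vanishing_poly s p T \<and> lead_coeff p = 1 \<and>
     (\<forall>q. vanishing_poly s q T \<longrightarrow> degree p \<le> degree q)"

definition nilpotent_map :: "('v::zero \<Rightarrow> 'v) \<Rightarrow> bool" where
  "nilpotent_map T \<longleftrightarrow> (\<exists>m. T ^^ m = (\<lambda>_. 0))"

definition is_eigenvalue :: "('f \<Rightarrow> 'v::zero \<Rightarrow> 'v) \<Rightarrow> ('v \<Rightarrow> 'v) \<Rightarrow> 'f \<Rightarrow> bool" where
  "is_eigenvalue s T c \<longleftrightarrow> (\<exists>v. v \<noteq> 0 \<and> T v = s c v)"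

definition homogeneous :: "('f::field \<Rightarrow> 'v \<Rightarrow> 'v) \<Rightarrow> nat \<Rightarrow> ('v \<Rightarrow> 'v) \<Rightarrow> bool" where
  "homogeneous s \<gamma> T \<longleftrightarrow> (\<forall>a v. a \<noteq> 0 \<longrightarrow> T (s a v) = s (a ^ \<gamma>) (T v))"

text \<open>F = R or C: modelled by the class real_normed_field (whose instances are,
  up to isomorphism, exactly R and C); |a| is the norm, viewed back in F.\<close>
definition abs_homogeneous :: "('f::real_normed_field \<Rightarrow> 'v \<Rightarrow> 'v) \<Rightarrow> real \<Rightarrow> ('v \<Rightarrow> 'v) \<Rightarrow> bool" where
  "abs_homogeneous s \<gamma> T \<longleftrightarrow> (\<forall>a v. a \<noteq> 0 \<longrightarrow> T (s a v) = s (of_real (norm a powr \<gamma>)) (T v))"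

definition pos_homogeneous :: "(real \<Rightarrow> 'v \<Rightarrow> 'v) \<Rightarrow> real \<Rightarrow> ('v \<Rightarrow> 'v) \<Rightarrow> bool" where
  "pos_homogeneous s \<gamma> T \<longleftrightarrow> (\<forall>a v. a > 0 \<longrightarrow> T (s a v) = s (a powr \<gamma>) (T v))"

definition setting :: "('f::field \<Rightarrow> 'v::ab_group_add \<Rightarrow> 'v) \<Rightarrow> ('v \<Rightarrow> 'v) \<Rightarrow> 'f poly \<Rightarrow> bool" where
  "setting s T p \<longleftrightarrow> vector_space s \<and> (\<exists>v::'v. v \<noteq> 0) \<and>
     (\<exists>q. vanishing_poly s q T) \<and> minimal_poly s p T"

end

theory Submission
  imports Defs
begin

text \<open>Everything is read off the relation \<open>p(T) = 0\<close> evaluated along suitable vectors.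
  If \<open>T\<^sup>i v = r\<^sup>i v\<close> for all \<open>i\<close> and \<open>v \<noteq> 0\<close>, then \<open>p(r) v = p(T) v = 0\<close>, so \<open>p(r) = 0\<close>:
  under 1-homogeneity eigenvector orbits are geometric, and under 0-homogeneity \<open>c v\<close> is a
  fixed point for every eigenvector \<open>v\<close> with eigenvalue \<open>c \<noteq> 0\<close>. Two distinct vectors with
  the same image (such as \<open>v\<close> and \<open>a v\<close> under 0-homogeneity) kill the constant coefficient of \<open>p\<close>.
  If some \<open>g\<close> satisfies \<open>T\<^sup>i \<circ> g = w\<^sub>i T\<^sup>i\<close> with \<open>w\<^sub>i \<noteq> w\<^sub>d\<close> for \<open>i < d = deg p\<close>, then
  \<open>p(T) \<circ> g - w\<^sub>d p(T)\<close> comes from a vanishing polynomial of degree below \<open>d\<close>, so \<open>p = x\<^sup>d\<close> and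
  \<open>T\<close> is nilpotent; \<open>\<gamma>\<close>-homogeneity provides \<open>g = a \<cdot> _\<close> with the weights \<open>a\<^bsup>\<gamma>\<^sup>i\<^esup>\<close>, which are
  distinct for \<open>\<gamma> \<notin> {0, 1}\<close> and a suitable \<open>a\<close>. Finally, for nilpotent \<open>T\<close> and \<open>p = (x - c) q\<close>,
  the map \<open>u = q(T)\<close> satisfies \<open>u \<circ> T = c u\<close>, so \<open>c \<noteq> 0\<close> would force \<open>u = 0\<close>, contradicting
  the minimality of \<open>p\<close>.\<close>

lemma nilpotent_map_zero:
  assumes "nilpotent_map T"
  shows "T 0 = 0"
proof -
  obtain m where m: "T ^^ m = (\<lambda>_. 0)" using assms unfolding nilpotent_map_def by blast
  have "T 0 = T ((T ^^ m) 0)" by (simp add: m)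
  also have "\<dots> = (T ^^ m) (T 0)" by (rule funpow_swap1)
  finally show ?thesis by (simp add: m)
qed

lemma nilpotent_map_kernel:
  fixes T :: "'a::zero \<Rightarrow> 'a" and v :: 'a
  assumes "nilpotent_map T" "v \<noteq> 0"
  shows "\<exists>w. w \<noteq> 0 \<and> T w = 0"
proof -
  obtain m where "T ^^ m = (\<lambda>_. 0)" using assms(1) unfolding nilpotent_map_def by blast
  then have "\<exists>k. (T ^^ k) v = 0" by (intro exI[of _ m]) simp
  define k where "k = (LEAST k. (T ^^ k) v = 0)"
  have k: "(T ^^ k) v = 0" unfolding k_def by (rule LeastI_ex) fact
  then obtain j where j: "k = Suc j" using assms(2) by (cases k) auto
  then have "(T ^^ j) v \<noteq> 0" unfolding k_def by (intro not_less_Least) (simp add: k_def)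
  moreover have "T ((T ^^ j) v) = 0" using k j by simp
  ultimately show ?thesis by blast
qed

context vector_space begin

lemma scale_eq_self_iff: "scale a x = x \<longleftrightarrow> a = 1 \<or> x = 0"
  using scale_cancel_right[of a x 1] by simp

lemma poly_app_eq_sum_atMost:
  assumes "degree p \<le> n"
  shows "poly_app scale p T v = (\<Sum>i\<le>n. scale (coeff p i) ((T ^^ i) v))"
  unfolding poly_app_def
proof (rule sum.mono_neutral_left)
  show "{..degree p} \<subseteq> {..n}" using assms by auto
  show "\<forall>i\<in>{..n} - {..degree p}. scale (coeff p i) ((T ^^ i) v) = 0" by (simp add: coeff_eq_0)
qed simp

lemma poly_app_diff: "poly_app scale (p - q) T v = poly_app scale p T v - poly_app scale q T v"
proof -
  let ?n = "max (degree p) (degree q)"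
  show ?thesis
    using poly_app_eq_sum_atMost[of "p - q" ?n] poly_app_eq_sum_atMost[of p ?n]
      poly_app_eq_sum_atMost[of q ?n] degree_diff_le_max[of p q]
    by (simp add: scale_left_diff_distrib sum_subtractf)
qed

lemma poly_app_smult: "poly_app scale (smult c p) T v = scale c (poly_app scale p T v)"
  using poly_app_eq_sum_atMost[of "smult c p" "degree p"]
  by (simp add: poly_app_def scale_sum_right)

lemma poly_app_pCons_0: "poly_app scale (pCons 0 p) T v = poly_app scale p T (T v)"
proof -
  have "poly_app scale (pCons 0 p) T v = (\<Sum>i\<le>Suc (degree p). scale (coeff (pCons 0 p) i) ((T ^^ i) v))"
    by (rule poly_app_eq_sum_atMost) (rule degree_pCons_le)
  also have "\<dots> = (\<Sum>i\<le>degree p. scale (coeff p i) ((T ^^ i) (T v)))"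
    by (simp add: sum.atMost_Suc_shift funpow_Suc_right del: funpow.simps sum.atMost_Suc)
  finally show ?thesis by (simp add: poly_app_def)
qed

lemma poly_app_sum_monom:
  "poly_app scale (\<Sum>i\<le>n. monom (c i) i) T v = (\<Sum>i\<le>n. scale (c i) ((T ^^ i) v))"
proof -
  have "degree (\<Sum>i\<le>n. monom (c i) i) \<le> n"
    by (rule degree_sum_le) (auto intro: order.trans[OF degree_monom_le])
  then show ?thesis by (simp add: poly_app_eq_sum_atMost coeff_sum_monom)
qed

lemma poly_app_geometric_orbit:
  assumes "\<And>i. (T ^^ i) w = scale (r ^ i) w"
  shows "poly_app scale p T w = scale (poly p r) w"
  unfolding poly_app_def poly_altdef assms
  by (simp add: scale_sum_left)

lemma poly_app_fixed_zero:
  assumes "T 0 = 0"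
  shows "poly_app scale p T 0 = 0"
proof -
  have "(T ^^ i) 0 = 0" for i by (induction i) (simp_all add: assms)
  then show ?thesis by (simp add: poly_app_def)
qed

lemma minimal_poly_vanishes: "minimal_poly scale p T \<Longrightarrow> poly_app scale p T v = 0"
  by (simp add: minimal_poly_def vanishing_poly_def)

lemma minimal_poly_nonzero: "minimal_poly scale p T \<Longrightarrow> p \<noteq> 0"
  by (simp add: minimal_poly_def vanishing_poly_def)

lemma vanishing_below_minimal_poly_eq_0:
  assumes "minimal_poly scale p T" "degree q < degree p" "\<And>v. poly_app scale q T v = 0"
  shows "q = 0"
  using assms by (auto simp: minimal_poly_def vanishing_poly_def)

lemma minimal_poly_root_of_orbit:
  assumes "minimal_poly scale p T" "w \<noteq> 0" "\<And>i. (T ^^ i) w = scale (r ^ i) w"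
  shows "poly p r = 0"
  using poly_app_geometric_orbit[of T w r p] assms by (simp add: minimal_poly_vanishes)

lemma minimal_poly_root_one_of_fixed_point:
  assumes "minimal_poly scale p T" "w \<noteq> 0" "T w = w"
  shows "poly p 1 = 0"
proof -
  have "(T ^^ i) w = scale (1 ^ i) w" for i
    by (induction i) (simp_all add: assms(3))
  with assms(1,2) show ?thesis by (rule minimal_poly_root_of_orbit)
qed

lemma minimal_poly_root_zero_of_not_inj:
  assumes "minimal_poly scale p T" "u \<noteq> w" "T u = T w"
  shows "poly p 0 = 0"
proof -
  have "(T ^^ Suc i) u = (T ^^ Suc i) w" for i
    by (simp add: funpow_Suc_right assms(3) del: funpow.simps)
  then have "poly_app scale p T u - poly_app scale p T w = scale (coeff p 0) (u - w)"
    by (simp add: poly_app_def sum.atMost_shift scale_right_diff_distrib del: funpow.simps)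
  with assms show ?thesis by (simp add: minimal_poly_vanishes poly_0_coeff_0)
qed

lemma minimal_poly_nilpotent_root_zero:
  fixes v :: 'b
  assumes "minimal_poly scale p T" "nilpotent_map T" "v \<noteq> 0"
  shows "poly p 0 = 0"
proof -
  obtain w where "w \<noteq> 0" "T w = 0" using nilpotent_map_kernel[OF assms(2,3)] by blast
  with assms(1) nilpotent_map_zero[OF assms(2)] show ?thesis
    by (intro minimal_poly_root_zero_of_not_inj[of p T w 0]) simp_all
qed

lemma minimal_poly_nilpotent_root:
  assumes mp: "minimal_poly scale p T" and nil: "nilpotent_map T" and "poly p c = 0"
  shows "c = 0"
proof (rule ccontr)
  assume c: "c \<noteq> 0"
  obtain m where m: "T ^^ m = (\<lambda>_. 0)" using nil unfolding nilpotent_map_def by blast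
  obtain q where pq: "p = [:-c, 1:] * q" using \<open>poly p c = 0\<close> by (metis dvdE poly_eq_0_iff_dvd)
  have "q \<noteq> 0" using pq minimal_poly_nonzero[OF mp] by auto
  then have deg: "degree q < degree p" unfolding pq by (subst degree_mult_eq) auto
  define u where "u = poly_app scale q T"
  have "p = pCons 0 q - smult c q" by (simp add: pq)
  then have "poly_app scale p T v = u (T v) - scale c (u v)" for v
    by (simp add: u_def poly_app_diff poly_app_pCons_0 poly_app_smult)
  then have "u (T v) = scale c (u v)" for v by (metis minimal_poly_vanishes[OF mp] eq_iff_diff_eq_0)
  then have "u ((T ^^ k) v) = scale (c ^ k) (u v)" for k v
    by (induction k) simp_all
  moreover have "u 0 = 0" unfolding u_def by (rule poly_app_fixed_zero) (rule nilpotent_map_zero[OF nil])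
  ultimately have "scale (c ^ m) (u v) = 0" for v using m by metis
  then have "u v = 0" for v using c by simp
  then have "q = 0" using vanishing_below_minimal_poly_eq_0[OF mp deg] by (simp add: u_def)
  with \<open>q \<noteq> 0\<close> show False ..
qed

lemma nilpotent_eigenvalue:
  assumes nil: "nilpotent_map T"
    and scaling: "\<And>b v. b \<noteq> 0 \<Longrightarrow> \<exists>b'. b' \<noteq> 0 \<and> T (scale b v) = scale b' (T v)"
    and "is_eigenvalue scale T c"
  shows "c = 0"
proof (rule ccontr)
  assume c: "c \<noteq> 0"
  obtain v where v: "v \<noteq> 0" "T v = scale c v" using assms(3) unfolding is_eigenvalue_def by blast
  obtain m where m: "T ^^ m = (\<lambda>_. 0)" using nil unfolding nilpotent_map_def by blast
  have "\<exists>b. b \<noteq> 0 \<and> (T ^^ i) v = scale b v" for i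
  proof (induction i)
    case 0
    show ?case by (intro exI[of _ 1]) simp
  next
    case (Suc i)
    then obtain b where b: "b \<noteq> 0" "(T ^^ i) v = scale b v" by blast
    obtain b' where b': "b' \<noteq> 0" "T (scale b v) = scale b' (T v)" using scaling[OF b(1)] by blast
    show ?case using b b' c v by (intro exI[of _ "b' * c"]) simp
  qed
  then obtain b where "b \<noteq> 0" "(T ^^ m) v = scale b v" by blast
  with m v show False by simp
qed

lemma nilpotent_spectrum:
  fixes v :: 'b
  assumes "minimal_poly scale p T" "nilpotent_map T" "v \<noteq> 0"
    and "\<And>b v. b \<noteq> 0 \<Longrightarrow> \<exists>b'. b' \<noteq> 0 \<and> T (scale b v) = scale b' (T v)"
  shows "(\<forall>c. is_eigenvalue scale T c \<longleftrightarrow> c = 0) \<and> (\<forall>x. poly p x = 0 \<longleftrightarrow> x = 0)"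
proof -
  have "is_eigenvalue scale T 0"
    using nilpotent_map_kernel[OF assms(2,3)] unfolding is_eigenvalue_def by auto
  then show ?thesis
    using assms nilpotent_eigenvalue minimal_poly_nilpotent_root minimal_poly_nilpotent_root_zero
    by blast
qed

lemma nilpotent_if_distinct_weights:
  assumes mp: "minimal_poly scale p T"
    and distinct: "\<And>i. i < degree p \<Longrightarrow> w i \<noteq> w (degree p)"
    and weights: "\<And>v i. (T ^^ i) (g v) = scale (w i) ((T ^^ i) v)"
  shows "nilpotent_map T"
proof -
  let ?d = "degree p"
  define r where "r = (\<Sum>i\<le>?d. monom (coeff p i * w i) i) - smult (w ?d) p"
  have coeff_r: "coeff r i = coeff p i * (w i - w ?d)" if "i \<le> ?d" for i
    using that by (simp add: r_def coeff_sum_monom algebra_simps)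
  have "degree r \<le> ?d"
    unfolding r_def by (intro degree_diff_le degree_sum_le) (auto intro: order.trans[OF degree_monom_le])
  moreover have "coeff r ?d = 0" by (simp add: coeff_r)
  ultimately have "degree r \<noteq> ?d \<or> r = 0" by (metis leading_coeff_0_iff)
  moreover have "poly_app scale r T v = 0" for v
  proof -
    have "poly_app scale r T v =
        (\<Sum>i\<le>?d. scale (coeff p i * w i) ((T ^^ i) v)) - scale (w ?d) (poly_app scale p T v)"
      by (simp add: r_def poly_app_diff poly_app_smult poly_app_sum_monom)
    also have "(\<Sum>i\<le>?d. scale (coeff p i * w i) ((T ^^ i) v)) = poly_app scale p T (g v)"
      by (simp add: poly_app_def weights)
    finally show ?thesis by (simp add: minimal_poly_vanishes[OF mp])
  qed
  ultimately have "r = 0"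
    using vanishing_below_minimal_poly_eq_0[OF mp] \<open>degree r \<le> ?d\<close> by fastforce
  then have low: "coeff p i = 0" if "i < ?d" for i
    using coeff_r[of i] distinct[OF that] that by simp
  have "poly_app scale p T v = scale (coeff p ?d) ((T ^^ ?d) v)" for v
    unfolding poly_app_def lessThan_Suc_atMost[symmetric] by (simp add: low)
  then have "(T ^^ ?d) v = 0" for v
    using mp by (simp add: minimal_poly_def minimal_poly_vanishes)
  then show ?thesis unfolding nilpotent_map_def by blast
qed

lemma funpow_eigenvector:
  assumes "T 0 = 0" "T w = scale r w"
    and "\<And>i. r ^ i \<noteq> 0 \<Longrightarrow> T (scale (r ^ i) w) = scale (r ^ i) (T w)"
  shows "(T ^^ i) w = scale (r ^ i) w"
proof (induction i)
  case (Suc i)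
  show ?case
  proof (cases "r ^ i = 0")
    case True
    with Suc assms(1) show ?thesis by simp
  next
    case False
    with Suc assms(2,3) show ?thesis by (simp add: mult.commute)
  qed
qed simp

lemma minimal_poly_root_one_of_invariant_eigenvalue:
  assumes "minimal_poly scale p T" "is_eigenvalue scale T c" "c \<noteq> 0" "\<And>v. T (scale c v) = T v"
  shows "poly p 1 = 0"
proof -
  obtain v where "v \<noteq> 0" "T v = scale c v" using assms(2) unfolding is_eigenvalue_def by blast
  with assms(3,4) have "scale c v \<noteq> 0" "T (scale c v) = scale c v" by simp_all
  with assms(1) show ?thesis by (rule minimal_poly_root_one_of_fixed_point)
qed

lemma minimal_poly_root_zero_of_invariant:
  assumes "minimal_poly scale p T" "v \<noteq> 0" "a \<noteq> 1" "T (scale a v) = T v"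
  shows "poly p 0 = 0"
  using assms by (intro minimal_poly_root_zero_of_not_inj[of p T "scale a v" v]) (simp_all add: scale_eq_self_iff)

end

lemma homogeneous_funpow:
  assumes "homogeneous s \<gamma> T" "a \<noteq> 0"
  shows "(T ^^ i) (s a v) = s (a ^ (\<gamma> ^ i)) ((T ^^ i) v)"
proof (induction i)
  case (Suc i)
  have "a ^ (\<gamma> ^ i) \<noteq> 0" using assms(2) by simp
  with Suc assms(1) have "(T ^^ Suc i) (s a v) = s ((a ^ (\<gamma> ^ i)) ^ \<gamma>) ((T ^^ Suc i) v)"
    by (simp add: homogeneous_def)
  also have "(a ^ (\<gamma> ^ i)) ^ \<gamma> = a ^ (\<gamma> ^ Suc i)"
    by (simp only: power_Suc2 power_mult)
  finally show ?case .
qed simp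

lemma abs_homogeneous_funpow:
  fixes s :: "'r::real_normed_field \<Rightarrow> 'w \<Rightarrow> 'w"
  assumes "abs_homogeneous s \<gamma> T" "a > 0"
  shows "(T ^^ i) (s (of_real a) v) = s (of_real (a powr (\<gamma> ^ i))) ((T ^^ i) v)"
proof (induction i)
  case (Suc i)
  have "(of_real (a powr (\<gamma> ^ i)) :: 'r) \<noteq> 0" using assms(2) by simp
  with Suc assms(1)
  have "(T ^^ Suc i) (s (of_real a) v) = s (of_real (\<bar>a powr (\<gamma> ^ i)\<bar> powr \<gamma>)) ((T ^^ Suc i) v)"
    by (simp add: abs_homogeneous_def)
  also have "\<bar>a powr (\<gamma> ^ i)\<bar> powr \<gamma> = a powr (\<gamma> ^ Suc i)"
    by (simp add: powr_powr mult.commute)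
  finally show ?case .
qed (use assms(2) in simp)

lemma pos_homogeneous_funpow:
  assumes "pos_homogeneous s \<gamma> T" "a > 0"
  shows "(T ^^ i) (s a v) = s (a powr (\<gamma> ^ i)) ((T ^^ i) v)"
proof (induction i)
  case (Suc i)
  have "a powr (\<gamma> ^ i) > 0" using assms(2) by simp
  with Suc assms(1) have "(T ^^ Suc i) (s a v) = s ((a powr (\<gamma> ^ i)) powr \<gamma>) ((T ^^ Suc i) v)"
    by (simp add: pos_homogeneous_def)
  also have "(a powr (\<gamma> ^ i)) powr \<gamma> = a powr (\<gamma> ^ Suc i)"
    by (simp add: powr_powr mult.commute)
  finally show ?case .
qed (use assms(2) in simp)

lemma two_powr_power_neq:
  fixes \<gamma> :: real
  assumes "\<gamma> \<ge> 0" "\<gamma> \<notin> {0, 1}" "i < d"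
  shows "(2::real) powr (\<gamma> ^ i) \<noteq> 2 powr (\<gamma> ^ d)"
proof -
  have "\<gamma> > 0" "\<gamma> \<noteq> 1" using assms(1,2) by auto
  then have "\<gamma> ^ i \<noteq> \<gamma> ^ d" using assms(3) by (simp add: power_inject_exp')
  then show ?thesis by (simp add: powr_inj)
qed

lemma infinite_field_distinct_iterated_powers:
  assumes "infinite (UNIV :: 'a::field set)" "\<gamma> > 1"
  shows "\<exists>a::'a. a \<noteq> 0 \<and> (\<forall>i<d. a ^ (\<gamma> ^ i) \<noteq> a ^ (\<gamma> ^ d))"
proof -
  define q :: "nat \<Rightarrow> 'a poly" where "q i = monom 1 (\<gamma> ^ i) - monom 1 (\<gamma> ^ d)" for i
  have "q i \<noteq> 0" if "i < d" for i
  proof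
    assume "q i = 0"
    then have "coeff (q i) (\<gamma> ^ d) = 0" by simp
    moreover have "\<gamma> ^ i \<noteq> \<gamma> ^ d" using assms(2) that by simp
    ultimately show False by (simp add: q_def coeff_monom)
  qed
  then have "finite (insert 0 (\<Union>i<d. {a. poly (q i) a = 0}))"
    by (auto intro: poly_roots_finite)
  then obtain a where a: "a \<notin> insert 0 (\<Union>i<d. {a. poly (q i) a = 0})"
    using ex_new_if_finite[OF assms(1)] by blast
  then have "poly (q i) a \<noteq> 0" if "i < d" for i
    using that by blast
  then have "a ^ (\<gamma> ^ i) \<noteq> a ^ (\<gamma> ^ d)" if "i < d" for i
    using that by (simp add: q_def poly_monom)
  with a show ?thesis by blast
qed

lemma field_exists_not_0_1:
  assumes "card (UNIV :: 'a::field set) \<noteq> 2"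
  shows "\<exists>a::'a. a \<noteq> 0 \<and> a \<noteq> 1"
proof (rule ccontr)
  assume "\<not> ?thesis"
  then have "(UNIV :: 'a set) = {0, 1}" by auto
  then have "card (UNIV :: 'a set) = card {0 :: 'a, 1}" by (rule arg_cong)
  with assms show False by simp
qed

lemma setting_minimal_poly: "setting s T p \<Longrightarrow> minimal_poly s p T"
  by (simp add: setting_def)

lemma setting_nontrivial:
  fixes s :: "'a::field \<Rightarrow> 'b::ab_group_add \<Rightarrow> 'b"
  shows "setting s T p \<Longrightarrow> \<exists>v::'b. v \<noteq> 0"
  by (simp add: setting_def)

lemma nilpotent_homogeneous_spectrum:
  fixes s :: "'f::field \<Rightarrow> 'v::ab_group_add \<Rightarrow> 'v"
  assumes "setting s T p" "nilpotent_map T" "homogeneous s \<gamma> T"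
  shows "(\<forall>c. is_eigenvalue s T c \<longleftrightarrow> c = 0) \<and> (\<forall>x. poly p x = 0 \<longleftrightarrow> x = 0)"
proof -
  interpret vector_space s using assms(1) by (simp add: setting_def)
  obtain v :: 'v where "v \<noteq> 0" using setting_nontrivial[OF assms(1)] by blast
  moreover have "\<exists>b'. b' \<noteq> 0 \<and> T (s b u) = s b' (T u)" if "b \<noteq> 0" for b u
    using assms(3) that unfolding homogeneous_def by (intro exI[of _ "b ^ \<gamma>"]) simp
  ultimately show ?thesis
    using nilpotent_spectrum[OF setting_minimal_poly[OF assms(1)] assms(2)] by blast
qed

lemma nilpotent_abs_homogeneous_spectrum:
  fixes s :: "'r::real_normed_field \<Rightarrow> 'w::ab_group_add \<Rightarrow> 'w"
  assumes "setting s T p" "nilpotent_map T" "abs_homogeneous s \<gamma> T"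
  shows "(\<forall>c. is_eigenvalue s T c \<longleftrightarrow> c = 0) \<and> (\<forall>x. poly p x = 0 \<longleftrightarrow> x = 0)"
proof -
  interpret vector_space s using assms(1) by (simp add: setting_def)
  obtain v :: 'w where "v \<noteq> 0" using setting_nontrivial[OF assms(1)] by blast
  moreover have "\<exists>b'. b' \<noteq> 0 \<and> T (s b u) = s b' (T u)" if "b \<noteq> 0" for b u
    using assms(3) that unfolding abs_homogeneous_def
    by (intro exI[of _ "of_real (norm b powr \<gamma>)"]) simp
  ultimately show ?thesis
    using nilpotent_spectrum[OF setting_minimal_poly[OF assms(1)] assms(2)] by blast
qed

lemma homogeneous_imp_nilpotent:
  fixes s :: "'f::field \<Rightarrow> 'v::ab_group_add \<Rightarrow> 'v"
  assumes "setting s T p" "infinite (UNIV :: 'f set)" "\<gamma> \<notin> {0, 1}" "homogeneous s \<gamma> T"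
  shows "nilpotent_map T"
proof -
  interpret vector_space s using assms(1) by (simp add: setting_def)
  obtain a :: 'f where a: "a \<noteq> 0" "\<forall>i<degree p. a ^ (\<gamma> ^ i) \<noteq> a ^ (\<gamma> ^ degree p)"
    using infinite_field_distinct_iterated_powers[OF assms(2), of \<gamma> "degree p"] assms(3) by auto
  show ?thesis
    by (rule nilpotent_if_distinct_weights[OF setting_minimal_poly[OF assms(1)], of "\<lambda>i. a ^ (\<gamma> ^ i)" "s a"])
      (use a homogeneous_funpow[OF assms(4) a(1)] in auto)
qed

lemma abs_homogeneous_imp_nilpotent:
  fixes s :: "'r::real_normed_field \<Rightarrow> 'w::ab_group_add \<Rightarrow> 'w"
  assumes "setting s T p" "\<gamma> \<ge> 0" "\<gamma> \<notin> {0, 1}" "abs_homogeneous s \<gamma> T"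
  shows "nilpotent_map T"
proof -
  interpret vector_space s using assms(1) by (simp add: setting_def)
  show ?thesis
    by (rule nilpotent_if_distinct_weights[OF setting_minimal_poly[OF assms(1)],
          of "\<lambda>i. of_real (2 powr (\<gamma> ^ i))" "s (of_real 2)"])
      (use two_powr_power_neq[OF assms(2,3)] abs_homogeneous_funpow[OF assms(4), of 2] in auto)
qed

lemma pos_homogeneous_imp_nilpotent:
  fixes s :: "real \<Rightarrow> 'u::ab_group_add \<Rightarrow> 'u"
  assumes "setting s T p" "\<gamma> \<ge> 0" "\<gamma> \<notin> {0, 1}" "pos_homogeneous s \<gamma> T"
  shows "nilpotent_map T"
proof -
  interpret vector_space s using assms(1) by (simp add: setting_def)
  show ?thesis
    by (rule nilpotent_if_distinct_weights[OF setting_minimal_poly[OF assms(1)],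
          of "\<lambda>i. 2 powr (\<gamma> ^ i)" "s 2"])
      (use two_powr_power_neq[OF assms(2,3)] pos_homogeneous_funpow[OF assms(4), of 2] in auto)
qed

lemma homogeneous_1_eigenvalue_root:
  fixes s :: "'f::field \<Rightarrow> 'v::ab_group_add \<Rightarrow> 'v"
  assumes "setting s T p" "homogeneous s 1 T" "card (UNIV :: 'f set) \<noteq> 2" "is_eigenvalue s T c"
  shows "poly p c = 0"
proof -
  interpret vector_space s using assms(1) by (simp add: setting_def)
  have lin: "T (s b u) = s b (T u)" if "b \<noteq> 0" for b u
    using assms(2) that by (simp add: homogeneous_def)
  obtain a :: 'f where "a \<noteq> 0" "a \<noteq> 1" using field_exists_not_0_1[OF assms(3)] by blast
  have "T 0 = s a (T 0)" using lin[OF \<open>a \<noteq> 0\<close>, of 0] by simp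
  with \<open>a \<noteq> 1\<close> have "T 0 = 0" using scale_eq_self_iff[of a "T 0"] by simp
  obtain v where v: "v \<noteq> 0" "T v = s c v" using assms(4) unfolding is_eigenvalue_def by blast
  have "(T ^^ i) v = s (c ^ i) v" for i
    by (rule funpow_eigenvector[OF \<open>T 0 = 0\<close> v(2) lin])
  then show ?thesis by (rule minimal_poly_root_of_orbit[OF setting_minimal_poly[OF assms(1)] v(1)])
qed

text \<open>For an eigenvector \<open>v\<close> with eigenvalue \<open>c \<noteq> 0\<close>, the vector \<open>c v\<close> is an eigenvector with
  eigenvalue \<open>|c|\<close>, on whose orbit \<open>T\<close> acts linearly.\<close>
lemma abs_homogeneous_1_roots:
  fixes s :: "'r::real_normed_field \<Rightarrow> 'w::ab_group_add \<Rightarrow> 'w"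
  assumes "setting s T p" "abs_homogeneous s 1 T"
  shows "poly p 0 = 0 \<and> (\<forall>c. is_eigenvalue s T c \<longrightarrow> poly p (of_real (norm c)) = 0)"
proof -
  interpret vector_space s using assms(1) by (simp add: setting_def)
  note mp = setting_minimal_poly[OF assms(1)]
  have lin: "T (s b u) = s (of_real (norm b)) (T u)" if "b \<noteq> 0" for b u
    using assms(2) that by (simp add: abs_homogeneous_def)
  obtain v :: 'w where "v \<noteq> 0" using setting_nontrivial[OF assms(1)] by blast
  moreover have "T (s (- 1) v) = T v" using lin[of "- 1" v] by simp
  ultimately have "poly p 0 = 0" by (intro minimal_poly_root_zero_of_invariant[OF mp, of v "- 1"]) simp_all
  have "T 0 = s 2 (T 0)" using lin[of 2 0] by simp
  then have T0: "T 0 = 0" using scale_eq_self_iff[of 2 "T 0"] by simp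
  have "poly p (of_real (norm c)) = 0" if "is_eigenvalue s T c" for c
  proof -
    define r :: 'r where "r = of_real (norm c)"
    from that obtain u where u: "u \<noteq> 0" "T u = s c u" by (auto simp: is_eigenvalue_def)
    obtain w where w: "w \<noteq> 0" "T w = s r w"
    proof (cases "c = 0")
      case True
      with u show ?thesis by (intro that[of u]) (simp_all add: r_def)
    next
      case False
      with u lin[of c u] show ?thesis by (intro that[of "s c u"]) (simp_all add: r_def)
    qed
    have "T (s (r ^ i) w) = s (r ^ i) (T w)" if "r ^ i \<noteq> 0" for i
      using lin[OF that, of w] by (simp add: r_def norm_power)
    then have "(T ^^ i) w = s (r ^ i) w" for i by (rule funpow_eigenvector[OF T0 w(2)])
    from minimal_poly_root_of_orbit[OF mp w(1) this] show ?thesis by (simp add: r_def)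
  qed
  with \<open>poly p 0 = 0\<close> show ?thesis by blast
qed

lemma homogeneous_0_roots:
  fixes s :: "'f::field \<Rightarrow> 'v::ab_group_add \<Rightarrow> 'v"
  assumes "setting s T p" "homogeneous s 0 T"
  shows "(poly p 1 \<noteq> 0 \<longrightarrow> (\<forall>c. is_eigenvalue s T c \<longrightarrow> c = 0)) \<and>
    (card (UNIV :: 'f set) \<noteq> 2 \<longrightarrow> poly p 0 = 0)"
proof -
  interpret vector_space s using assms(1) by (simp add: setting_def)
  note mp = setting_minimal_poly[OF assms(1)]
  have inv: "T (s b u) = T u" if "b \<noteq> 0" for b u
    using assms(2) that by (simp add: homogeneous_def)
  obtain v :: 'v where "v \<noteq> 0" using setting_nontrivial[OF assms(1)] by blast
  then have "poly p 0 = 0" if "card (UNIV :: 'f set) \<noteq> 2"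
    using field_exists_not_0_1[OF that] inv minimal_poly_root_zero_of_invariant[OF mp] by blast
  moreover have "c = 0" if "poly p 1 \<noteq> 0" "is_eigenvalue s T c" for c
    using that inv minimal_poly_root_one_of_invariant_eigenvalue[OF mp] by blast
  ultimately show ?thesis by blast
qed

lemma abs_homogeneous_0_roots:
  fixes s :: "'r::real_normed_field \<Rightarrow> 'w::ab_group_add \<Rightarrow> 'w"
  assumes "setting s T p" "abs_homogeneous s 0 T"
  shows "(poly p 1 \<noteq> 0 \<longrightarrow> (\<forall>c. is_eigenvalue s T c \<longrightarrow> c = 0)) \<and> poly p 0 = 0"
proof -
  interpret vector_space s using assms(1) by (simp add: setting_def)
  note mp = setting_minimal_poly[OF assms(1)]
  have inv: "T (s b u) = T u" if "b \<noteq> 0" for b u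
    using assms(2) that by (simp add: abs_homogeneous_def)
  obtain v :: 'w where "v \<noteq> 0" using setting_nontrivial[OF assms(1)] by blast
  then have "poly p 0 = 0"
    by (rule minimal_poly_root_zero_of_invariant[OF mp _ _ inv[of 2 v]]) simp_all
  moreover have "c = 0" if "poly p 1 \<noteq> 0" "is_eigenvalue s T c" for c
    using that inv minimal_poly_root_one_of_invariant_eigenvalue[OF mp] by blast
  ultimately show ?thesis by blast
qed

lemma pos_homogeneous_0_roots:
  fixes s :: "real \<Rightarrow> 'u::ab_group_add \<Rightarrow> 'u"
  assumes "setting s T p" "pos_homogeneous s 0 T"
  shows "(poly p 1 \<noteq> 0 \<longrightarrow> (\<forall>c. c \<ge> 0 \<and> is_eigenvalue s T c \<longrightarrow> c = 0)) \<and> poly p 0 = 0"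
proof -
  interpret vector_space s using assms(1) by (simp add: setting_def)
  note mp = setting_minimal_poly[OF assms(1)]
  have inv: "T (s b u) = T u" if "b > 0" for b u
    using assms(2) that by (simp add: pos_homogeneous_def)
  obtain v :: 'u where "v \<noteq> 0" using setting_nontrivial[OF assms(1)] by blast
  then have "poly p 0 = 0"
    by (rule minimal_poly_root_zero_of_invariant[OF mp _ _ inv[of 2 v]]) simp_all
  moreover have "c = 0" if "poly p 1 \<noteq> 0" "c \<ge> 0" "is_eigenvalue s T c" for c
  proof (rule ccontr)
    assume "c \<noteq> 0"
    with \<open>c \<ge> 0\<close> have "\<And>u. T (s c u) = T u" by (simp add: inv)
    with that(1,3) \<open>c \<noteq> 0\<close> show False
      using minimal_poly_root_one_of_invariant_eigenvalue[OF mp] by blast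
  qed
  ultimately show ?thesis by blast
qed

theorem mainTheorem18:
  shows
  \<comment> \<open>(1)\<close>
  "(\<forall>(s :: 'f::field \<Rightarrow> 'v::ab_group_add \<Rightarrow> 'v) T p \<gamma>.
      setting s T p \<and> nilpotent_map T \<and> homogeneous s \<gamma> T \<longrightarrow>
      (\<forall>c. is_eigenvalue s T c \<longleftrightarrow> c = 0) \<and> (\<forall>x. poly p x = 0 \<longleftrightarrow> x = 0))
 \<and> (\<forall>(s :: 'r::real_normed_field \<Rightarrow> 'w::ab_group_add \<Rightarrow> 'w) T p \<gamma>.
      setting s T p \<and> nilpotent_map T \<and> \<gamma> \<ge> 0 \<and> abs_homogeneous s \<gamma> T \<longrightarrow>
      (\<forall>c. is_eigenvalue s T c \<longleftrightarrow> c = 0) \<and> (\<forall>x. poly p x = 0 \<longleftrightarrow> x = 0))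
  \<comment> \<open>(2)\<close>
 \<and> (\<forall>(s :: 'f \<Rightarrow> 'v \<Rightarrow> 'v) T p \<gamma>.
      setting s T p \<and> \<not> nilpotent_map T \<and> infinite (UNIV :: 'f set) \<and> \<gamma> \<notin> {0, 1} \<longrightarrow>
      \<not> homogeneous s \<gamma> T)
 \<and> (\<forall>(s :: 'r \<Rightarrow> 'w \<Rightarrow> 'w) T p \<gamma>.
      setting s T p \<and> \<not> nilpotent_map T \<and> \<gamma> \<ge> 0 \<and> \<gamma> \<notin> {0, 1} \<longrightarrow>
      \<not> abs_homogeneous s \<gamma> T)
 \<and> (\<forall>(s :: real \<Rightarrow> 'u::ab_group_add \<Rightarrow> 'u) T p \<gamma>.
      setting s T p \<and> \<not> nilpotent_map T \<and> \<gamma> \<ge> 0 \<and> \<gamma> \<notin> {0, 1} \<longrightarrow>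
      \<not> pos_homogeneous s \<gamma> T)
  \<comment> \<open>(3)\<close>
 \<and> (\<forall>(s :: 'f \<Rightarrow> 'v \<Rightarrow> 'v) T p.
      setting s T p \<and> homogeneous s 1 T \<and> (infinite (UNIV :: 'f set) \<or> card (UNIV :: 'f set) > 2) \<longrightarrow>
      (\<forall>c. is_eigenvalue s T c \<longrightarrow> poly p c = 0))
 \<and> (\<forall>(s :: 'r \<Rightarrow> 'w \<Rightarrow> 'w) T p.
      setting s T p \<and> abs_homogeneous s 1 T \<longrightarrow>
      poly p 0 = 0 \<and> (\<forall>c. is_eigenvalue s T c \<longrightarrow> poly p (of_real (norm c)) = 0))
  \<comment> \<open>(4)\<close>
 \<and> (\<forall>(s :: 'f \<Rightarrow> 'v \<Rightarrow> 'v) T p.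
      setting s T p \<and> homogeneous s 0 T \<longrightarrow>
      (poly p 1 \<noteq> 0 \<longrightarrow> (\<forall>c. is_eigenvalue s T c \<longrightarrow> c = 0)) \<and>
      (card (UNIV :: 'f set) \<noteq> 2 \<longrightarrow> poly p 0 = 0))
 \<and> (\<forall>(s :: 'r \<Rightarrow> 'w \<Rightarrow> 'w) T p.
      setting s T p \<and> abs_homogeneous s 0 T \<longrightarrow>
      (poly p 1 \<noteq> 0 \<longrightarrow> (\<forall>c. is_eigenvalue s T c \<longrightarrow> c = 0)) \<and> poly p 0 = 0)
 \<and> (\<forall>(s :: real \<Rightarrow> 'u \<Rightarrow> 'u) T p.
      setting s T p \<and> pos_homogeneous s 0 T \<longrightarrow>
      (poly p 1 \<noteq> 0 \<longrightarrow> (\<forall>c. c \<ge> 0 \<and> is_eigenvalue s T c \<longrightarrow> c = 0)) \<and> poly p 0 = 0)"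
  apply (intro conjI)
  subgoal using nilpotent_homogeneous_spectrum by blast
  subgoal using nilpotent_abs_homogeneous_spectrum by blast
  subgoal using homogeneous_imp_nilpotent by blast
  subgoal using abs_homogeneous_imp_nilpotent by blast
  subgoal using pos_homogeneous_imp_nilpotent by blast
  subgoal by (auto intro: homogeneous_1_eigenvalue_root)
  subgoal using abs_homogeneous_1_roots by blast
  subgoal using homogeneous_0_roots by blast
  subgoal using abs_homogeneous_0_roots by blast
  subgoal using pos_homogeneous_0_roots by blast
  done

end
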